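(* Let $R$ be a Galois ring of odd characteristic. Then every pure subgroup $K\le R^\times$ is strongly pure.
   Context: All rings have an identity. A finite local commutative ring $R$ with maximal ideal $\mathrm{rad}(R)$ and residue field of characteristic $p$ is a Galois ring if $\mathrm{rad}(R)=pR$. $K\le R^\times$ is pure if the only ideal $I$ of $R$ with $1+I\subseteq K$ is $\{0\}$. With $I_0=\{x\in\mathrm{rad}(R):x\,\mathrm{rad}(R)=\{0\}\}$ and $\pi_0:R\to R/I_0$ the natural epimorphism, $K$ is strongly pure if it is pure and, unless $R$ is a field, $\pi_0(K)$ is a strongly pure subgroup of $(R/I_0)^\times$ (recursive definition). *)

theory Defs
  imports "HOL-Algebra.Algebra"
begin

definition rad :: "('a, 'b) ring_scheme \<Rightarrow> 'a set" where
  "rad R = {x \<in> carrier R. \<forall>I. maximalideal I R \<longrightarrow> x \<in> I}"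

definition finite_local_cring :: "('a, 'b) ring_scheme \<Rightarrow> bool" where
  "finite_local_cring R \<longleftrightarrow> cring R \<and> finite (carrier R) \<and> (\<exists>!I. maximalideal I R)"

definition alg_ring_char :: "('a, 'b) ring_scheme \<Rightarrow> nat" where
  "alg_ring_char R = (if \<exists>n::nat>0. add_pow R n \<one>\<^bsub>R\<^esub> = \<zero>\<^bsub>R\<^esub>
                  then LEAST n::nat. n > 0 \<and> add_pow R n \<one>\<^bsub>R\<^esub> = \<zero>\<^bsub>R\<^esub> else 0)"

definition residue_char :: "('a, 'b) ring_scheme \<Rightarrow> nat" where
  "residue_char R = alg_ring_char (R Quot rad R)"

definition galois_ring :: "('a, 'b) ring_scheme \<Rightarrow> bool" where
  "galois_ring R \<longleftrightarrow> finite_local_cring R \<and>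
     rad R = {add_pow R (residue_char R) x | x. x \<in> carrier R}"

definition pure :: "('a, 'b) ring_scheme \<Rightarrow> 'a set \<Rightarrow> bool" where
  "pure R K \<longleftrightarrow> subgroup K (units_of R) \<and>
     (\<forall>I. ideal I R \<and> (\<forall>x\<in>I. \<one>\<^bsub>R\<^esub> \<oplus>\<^bsub>R\<^esub> x \<in> K) \<longrightarrow> I = {\<zero>\<^bsub>R\<^esub>})"

definition I0 :: "('a, 'b) ring_scheme \<Rightarrow> 'a set" where
  "I0 R = {x \<in> rad R. \<forall>y \<in> rad R. x \<otimes>\<^bsub>R\<^esub> y = \<zero>\<^bsub>R\<^esub>}"

definition pi0_image :: "('a, 'b) ring_scheme \<Rightarrow> 'a set \<Rightarrow> 'a set set" where
  "pi0_image R K = (\<lambda>k. I0 R +>\<^bsub>R\<^esub> k) ` K"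

(* Since HOL types cannot grow along the recursion, the quotient R/I_0 is
   replaced by an isomorphic copy S living in the same type (the notions are invariant
   under ring isomorphism, and such a copy always exists since |R/I_0| \<le> |R|). *)
inductive strongly_pure :: "'a ring \<Rightarrow> 'a set \<Rightarrow> bool" where
  sp_field: "pure R K \<Longrightarrow> field R \<Longrightarrow> strongly_pure R K"
| sp_step: "pure R K \<Longrightarrow> \<not> field R \<Longrightarrow> h \<in> ring_iso (R Quot I0 R) S \<Longrightarrow>
            strongly_pure S (h ` pi0_image R K) \<Longrightarrow> strongly_pure R K"

end

theory Submission
  imports Defs
begin

(*
  A Galois ring of odd characteristic is a finite local ring whose maximal ideal is generated
  by t = p 1, with 2 invertible; its ideals form the chain t^i R.  Unless R is a field, let t^N
  be the last nonzero power of t; then I_0 = t^N R, and R/I_0 is again such a ring, so by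
  induction on |R| it suffices to show that pi_0(K) is pure.  A nonzero ideal J of R/I_0 with
  1 + J inside pi_0(K) is proper and hence contains the image of t^(N-1) R, with N >= 2.  For
  x = t^(N-1) w we get 1 + x = k (1 + z) with k in K and z in I_0, and the binomial theorem
  (x^3 = t x^2 = 0, z^2 = t z = 0, 2 invertible) gives 1 + t^N w = (1 + x)^p = k^p in K.
  Thus 1 + I_0 lies in K, contradicting the purity of K.
*)

lemma (in ring_hom_ring) hom_add_pow:
  "x \<in> carrier R \<Longrightarrow> h (add_pow R (n::nat) x) = add_pow S n (h x)"
  using group_hom.hom_nat_pow[OF a_group_hom, of x n] by (simp add: add_pow_def)

lemma (in ring_hom_ring) hom_Units:
  assumes "u \<in> Units R"
  shows "h u \<in> Units S"
proof -
  obtain v where v: "v \<in> carrier R" "v \<otimes> u = \<one>" "u \<otimes> v = \<one>" "u \<in> carrier R"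
    using assms unfolding Units_def by blast
  then have "h v \<otimes>\<^bsub>S\<^esub> h u = \<one>\<^bsub>S\<^esub>" "h u \<otimes>\<^bsub>S\<^esub> h v = \<one>\<^bsub>S\<^esub>"
    by (metis hom_mult hom_one)+
  with v show ?thesis unfolding Units_def by auto
qed

lemma (in ring_hom_ring) hom_eq_iff_minus_in_kernel:
  assumes "a \<in> carrier R" "b \<in> carrier R"
  shows "h a = h b \<longleftrightarrow> a \<ominus> b \<in> a_kernel R S h"
proof -
  have "a_kernel R S h +> a = a_kernel R S h +> b \<longleftrightarrow> h a = h b"
    using assms unfolding rcos_eq_homeq[OF assms(1)] rcos_eq_homeq[OF assms(2)]
    by (auto simp: set_eq_iff)
  then show ?thesis
    using R.quotient_eq_iff_same_a_r_cos[OF kernel_is_ideal assms] by simp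
qed

lemma (in monoid) subgroup_units_of_subset:
  "subgroup K (units_of G) \<Longrightarrow> K \<subseteq> Units G"
  using subgroup.subset by (fastforce simp: units_of_carrier)

lemma (in monoid) subgroup_units_of_nat_pow_closed:
  assumes K: "subgroup K (units_of G)" and k: "k \<in> K"
  shows "k [^] (n::nat) \<in> K"
proof (induction n)
  case 0
  then show ?case
    using subgroup.one_closed[OF K] by (simp add: units_of_one)
next
  case (Suc n)
  then show ?case
    using subgroup.m_closed[OF K Suc k] by (simp add: units_of_mult)
qed

lemma (in ring_hom_ring) subgroup_units_image:
  assumes "subgroup K (units_of R)"
  shows "subgroup (h ` K) (units_of S)"
proof -
  have "h \<in> hom (units_of R) (units_of S)"
    using hom_Units R.Units_closed by (auto simp: hom_def units_of_carrier units_of_mult)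
  then have "group_hom (units_of R) (units_of S) h"
    using R.units_group S.units_group by (simp add: group_hom_def group_hom_axioms_def)
  then show ?thesis
    using group_hom.subgroup_img_is_subgroup assms by blast
qed

lemma (in ring) nat_pow_eq_zero_mono:
  assumes "x \<in> carrier R" "x [^] (m::nat) = \<zero>" "m \<le> n"
  shows "x [^] n = \<zero>"
proof -
  have "x [^] n = x [^] m \<otimes> x [^] (n - m)"
    using assms(1,3) by (simp add: nat_pow_mult)
  then show ?thesis
    using assms(1,2) by (simp only: l_null nat_pow_closed)
qed

lemma (in ring) nilpotent_not_unit:
  assumes "\<one> \<noteq> \<zero>" "x [^] (n::nat) = \<zero>"
  shows "x \<notin> Units R"
proof
  assume "x \<in> Units R"
  then have "\<zero> \<in> Units R"
    using Units_pow_closed[of x n] assms(2) by simp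
  then show False
    using assms(1) by (metis Units_r_inv Units_inv_closed Units_closed l_null)
qed

lemma (in cring) mult_Units_eq_zero_iff:
  assumes "u \<in> Units R" "x \<in> carrier R"
  shows "x \<otimes> u = \<zero> \<longleftrightarrow> x = \<zero>"
proof -
  have "x \<otimes> u = u \<otimes> x"
    using assms by (simp add: m_comm Units_closed)
  then show ?thesis
    using Units_l_cancel[OF assms(1) assms(2) zero_closed] assms(1) by (simp add: Units_closed)
qed

lemma (in ring) ideal_eq_carrier_if_unit:
  assumes "ideal J R" "j \<in> J" "j \<in> Units R"
  shows "J = carrier R"
proof -
  have "inv j \<otimes> j \<in> J"
    using assms ideal.I_l_closed by (metis Units_inv_closed)
  then show ?thesis
    using assms ideal.one_imp_carrier by simp
qed

lemma (in cring) mem_PIdl_iff: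
  "a \<in> carrier R \<Longrightarrow> x \<in> PIdl a \<longleftrightarrow> (\<exists>y\<in>carrier R. x = a \<otimes> y)"
  unfolding cgenideal_def using m_comm by blast

lemma (in cring) PIdl_memI: "a \<in> carrier R \<Longrightarrow> y \<in> carrier R \<Longrightarrow> a \<otimes> y \<in> PIdl a"
  using mem_PIdl_iff by blast

lemma (in cring) PIdl_memE:
  assumes "a \<in> carrier R" "x \<in> PIdl a"
  obtains y where "y \<in> carrier R" "x = a \<otimes> y"
  using assms mem_PIdl_iff by blast

lemma (in cring) PIdl_not_unit:
  assumes a: "a \<in> carrier R" "a \<notin> Units R" and x: "x \<in> PIdl a"
  shows "x \<notin> Units R"
proof
  obtain y where y: "y \<in> carrier R" "x = a \<otimes> y"
    using PIdl_memE[OF a(1) x] .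
  assume "x \<in> Units R"
  then show False
    using unit_factor[of a y] y a by simp
qed

lemma (in ring) finite_exists_maximalideal:
  assumes fin: "finite (carrier R)" and I: "ideal I R" "I \<noteq> carrier R"
  obtains M where "maximalideal M R" "I \<subseteq> M"
proof -
  define F where "F = {J. ideal J R \<and> I \<subseteq> J \<and> J \<noteq> carrier R}"
  have "F \<subseteq> Pow (carrier R)"
    unfolding F_def by (auto dest: ideal.Icarr)
  then have "finite F"
    using fin by (meson finite_Pow_iff finite_subset)
  moreover have "I \<in> F"
    unfolding F_def using I by blast
  ultimately obtain M where M: "M \<in> F" and top: "\<forall>J\<in>F. M \<le> J \<longrightarrow> M = J"
    using finite_has_maximal[of F] by blast
  have "maximalideal M R"
  proof (rule maximalidealI)
    show "ideal M R" "carrier R \<noteq> M"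
      using M unfolding F_def by auto
    fix J assume "ideal J R" "M \<subseteq> J" "J \<subseteq> carrier R"
    then show "J = M \<or> J = carrier R"
      using M top unfolding F_def by blast
  qed
  then show ?thesis
    using that M unfolding F_def by blast
qed

lemma (in cring) finite_local_rad_eq_nonunits:
  assumes "finite_local_cring R"
  shows "rad R = carrier R - Units R"
proof
  obtain M where M: "maximalideal M R" and uniq: "\<And>J. maximalideal J R \<Longrightarrow> J = M"
    using assms unfolding finite_local_cring_def by blast
  interpret M: maximalideal M R
    by (rule M)
  show "rad R \<subseteq> carrier R - Units R"
  proof
    fix x assume "x \<in> rad R"
    then have x: "x \<in> carrier R" "x \<in> M"
      using M unfolding rad_def by blast+
    then show "x \<in> carrier R - Units R"
      using ideal_eq_carrier_if_unit[OF M.is_ideal x(2)] M.I_notcarr by blast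
  qed
  show "carrier R - Units R \<subseteq> rad R"
  proof
    fix x assume x: "x \<in> carrier R - Units R"
    then have "PIdl x \<noteq> carrier R"
      using PIdl_not_unit[of x \<one>] Units_one_closed one_closed by blast
    then obtain J where "maximalideal J R" "PIdl x \<subseteq> J"
      using finite_exists_maximalideal[OF _ cgenideal_ideal] assms x
      unfolding finite_local_cring_def by blast
    then show "x \<in> rad R"
      unfolding rad_def using uniq cgenideal_self x by blast
  qed
qed

lemma (in cring) one_plus_pow_if_cube_zero:
  assumes a: "a \<in> carrier R" and cube: "a \<otimes> a \<otimes> a = \<zero>"
  shows "(\<one> \<oplus> a) [^] (m::nat) = \<one> \<oplus> add_pow R m a \<oplus> add_pow R (m * (m - 1) div 2) (a \<otimes> a)"
proof (induction m)
  case 0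
  then show ?case using a by simp
next
  case (Suc m)
  define M where "M = add_pow R m a"
  define C where "C = add_pow R (m * (m - 1) div 2) (a \<otimes> a)"
  have MC: "M \<in> carrier R" "C \<in> carrier R"
    unfolding M_def C_def using a by simp_all
  have Ma: "M \<otimes> a = add_pow R m (a \<otimes> a)" and Ca: "C \<otimes> a = \<zero>"
    unfolding M_def C_def using a cube by (simp_all add: add_pow_ldistr)
  have "(\<one> \<oplus> M \<oplus> C) \<otimes> (\<one> \<oplus> a) = \<one> \<oplus> (M \<oplus> a) \<oplus> (C \<oplus> M \<otimes> a) \<oplus> C \<otimes> a"
    using MC a by (simp add: l_distr r_distr a_ac)
  also have "\<dots> = \<one> \<oplus> (M \<oplus> a) \<oplus> (C \<oplus> add_pow R m (a \<otimes> a))"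
    using MC a by (simp add: Ma Ca)
  also have "M \<oplus> a = add_pow R (Suc m) a"
    unfolding M_def using a by simp
  also have "C \<oplus> add_pow R m (a \<otimes> a) = add_pow R (Suc m * (Suc m - 1) div 2) (a \<otimes> a)"
  proof -
    have "m * (m - 1) div 2 + m = Suc m * (Suc m - 1) div 2"
      by (cases m) (simp_all add: algebra_simps)
    then show ?thesis
      unfolding C_def using a by (simp add: add.nat_pow_mult)
  qed
  finally show ?case
    using Suc.IH M_def C_def by simp
qed

lemma (in cring) one_plus_pow_if_two_unit:
  assumes two: "add_pow R (2::nat) \<one> \<in> Units R" and a: "a \<in> carrier R"
    and cube: "a \<otimes> a \<otimes> a = \<zero>" and sq: "add_pow R (p::nat) (a \<otimes> a) = \<zero>"
  shows "(\<one> \<oplus> a) [^] p = \<one> \<oplus> add_pow R p a"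
proof -
  define C where "C = add_pow R (p * (p - 1) div 2) (a \<otimes> a)"
  have C: "C \<in> carrier R"
    unfolding C_def using a by simp
  have "even (p * (p - 1))"
    by (cases "even p") auto
  then have "add_pow R (2::nat) \<one> \<otimes> C = add_pow R (p * (p - 1)) (a \<otimes> a)"
    unfolding C_def using a by (simp add: add_pow_ldistr add.nat_pow_pow mult.commute)
  also have "\<dots> = add_pow R (p - 1) (add_pow R p (a \<otimes> a))"
    using a by (simp add: add.nat_pow_pow)
  also have "\<dots> = \<zero>"
    using sq by simp
  finally have "add_pow R (2::nat) \<one> \<otimes> C = add_pow R (2::nat) \<one> \<otimes> \<zero>"
    by simp
  then have "C = \<zero>"
    using Units_l_cancel[OF two C zero_closed] by simp
  then show ?thesis
    using one_plus_pow_if_cube_zero[OF a cube, of p] a unfolding C_def by simp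
qed

lemma (in ring) add_pow_one_mult: "add_pow R (a::nat) \<one> \<otimes> add_pow R b \<one> = add_pow R (a * b) \<one>"
proof -
  have "add_pow R a \<one> \<otimes> add_pow R b \<one> = add_pow R a (add_pow R b \<one>)"
    using add_pow_ldistr[OF one_closed, of "add_pow R b \<one>" a] by simp
  also have "\<dots> = add_pow R (a * b) \<one>"
    by (simp add: add.nat_pow_pow mult.commute)
  finally show ?thesis .
qed

lemma add_pow_alg_ring_char:
  assumes "alg_ring_char R \<noteq> 0"
  shows "add_pow R (alg_ring_char R) \<one>\<^bsub>R\<^esub> = \<zero>\<^bsub>R\<^esub>"
proof -
  have ex: "\<exists>n::nat>0. add_pow R n \<one>\<^bsub>R\<^esub> = \<zero>\<^bsub>R\<^esub>"
    using assms unfolding alg_ring_char_def by presburger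
  then show ?thesis
    unfolding alg_ring_char_def using LeastI_ex[OF ex] by simp
qed

lemma (in ring) two_unit_if_odd_char:
  assumes "odd (alg_ring_char R)"
  shows "add_pow R (2::nat) \<one> \<in> Units R"
proof -
  define h where "h = (alg_ring_char R + 1) div 2"
  have "alg_ring_char R \<noteq> 0"
    using assms by (intro notI) simp
  then have char: "add_pow R (alg_ring_char R) \<one> = \<zero>"
    by (rule add_pow_alg_ring_char)
  have "add_pow R (2 * h) \<one> = add_pow R (alg_ring_char R) \<one> \<oplus> \<one>"
    unfolding h_def using assms by (simp add: add.nat_pow_Suc)
  also have "\<dots> = \<one>"
    unfolding char by simp
  finally have "add_pow R (2::nat) \<one> \<otimes> add_pow R h \<one> = \<one>"
    "add_pow R h \<one> \<otimes> add_pow R (2::nat) \<one> = \<one>"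
    by (simp_all add: add_pow_one_mult mult.commute)
  moreover have "add_pow R (2::nat) \<one> \<in> carrier R" "add_pow R h \<one> \<in> carrier R"
    by simp_all
  ultimately show ?thesis
    unfolding Units_def by blast
qed

text \<open>Choosing a representative in each coset realises \<open>R Quot I\<close> on a subset of the carrier
  of \<open>R\<close>; \<open>strongly_pure\<close> needs the quotient to live in the same type.\<close>

lemma (in ring) weak_ring_morphism_coset_rep:
  assumes I: "ideal I R"
  shows "weak_ring_morphism (\<lambda>a. SOME b. b \<in> I +> a) I R"
proof (rule weak_ring_morphismI[OF I])
  interpret ideal I R by fact
  have same_coset: "I +> (SOME b. b \<in> I +> a) = I +> a" if a: "a \<in> carrier R" for a
  proof -
    have "(SOME b. b \<in> I +> a) \<in> I +> a"
      using a_rcos_self[OF a] by (rule someI)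
    then show ?thesis
      using a_repr_independence' a by (metis)
  qed
  fix a b assume ab: "a \<in> carrier R" "b \<in> carrier R"
  show "(SOME c. c \<in> I +> a) = (SOME c. c \<in> I +> b) \<longleftrightarrow> a \<ominus> b \<in> I"
  proof
    assume "(SOME c. c \<in> I +> a) = (SOME c. c \<in> I +> b)"
    then have "I +> a = I +> b"
      using same_coset ab by metis
    then show "a \<ominus> b \<in> I"
      using quotient_eq_iff_same_a_r_cos[OF I ab] by simp
  next
    assume "a \<ominus> b \<in> I"
    then show "(SOME c. c \<in> I +> a) = (SOME c. c \<in> I +> b)"
      using quotient_eq_iff_same_a_r_cos[OF I ab] by simp
  qed
qed

lemma (in cring) image_ring_is_cring:
  assumes "weak_ring_morphism f I R"
  shows "cring (image_ring f R)"
proof -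
  interpret ideal I R
    using weak_ring_morphism.axioms(1)[OF assms] .
  show ?thesis
    using cring.ring_iso_imp_img_cring[OF quotient_is_cring[OF is_cring]
        weak_ring_morphism_is_iso[OF assms]]
    unfolding image_ring_zero'[OF assms] by simp
qed

lemma (in ring) image_ring_one_neq_zero:
  assumes f: "weak_ring_morphism f I R" and "\<one> \<notin> I"
  shows "\<one>\<^bsub>image_ring f R\<^esub> \<noteq> \<zero>\<^bsub>image_ring f R\<^esub>"
  using weak_ring_morphism.inj_mod_ideal[OF f one_closed zero_closed] assms(2)
  by (simp add: image_ring_one image_ring_zero a_minus_def)

lemma (in ring) card_image_ring_less:
  assumes f: "weak_ring_morphism f I R" and fin: "finite (carrier R)"
    and x: "x \<in> I" "x \<noteq> \<zero>"
  shows "card (carrier (image_ring f R)) < card (carrier R)"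
proof -
  have xc: "x \<in> carrier R"
    using ideal.Icarr[OF weak_ring_morphism.axioms(1)[OF f] x(1)] .
  then have "f x = f \<zero>"
    using weak_ring_morphism.inj_mod_ideal[OF f xc zero_closed] x(1) by (simp add: a_minus_def)
  then have "\<not> inj_on f (carrier R)"
    using xc x(2) unfolding inj_on_def by blast
  then show ?thesis
    using card_image_le[OF fin, of f] inj_on_iff_eq_card[OF fin, of f]
    by (simp add: image_ring_carrier)
qed

lemma (in ring) the_elem_image_pi0_image:
  assumes f: "weak_ring_morphism f (I0 R) R" and K: "K \<subseteq> carrier R"
  shows "(\<lambda>C. the_elem (f ` C)) ` pi0_image R K = f ` K"
  unfolding pi0_image_def image_image
  using weak_ring_morphism_range[OF f] K by (intro image_cong) auto

section \<open>Finite chain rings\<close>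

locale finite_chain_ring = cring R for R (structure) +
  fixes t
  assumes finite_carrier: "finite (carrier R)"
    and t_closed [simp]: "t \<in> carrier R"
    and t_not_unit: "t \<notin> Units R"
    and nonunit_in_PIdl: "\<lbrakk>x \<in> carrier R; x \<notin> Units R\<rbrakk> \<Longrightarrow> x \<in> PIdl t"
begin

lemma PIdl_t_ideal: "ideal (PIdl t) R"
  by (rule cgenideal_ideal) simp

lemma PIdl_t_not_unit: "x \<in> PIdl t \<Longrightarrow> x \<notin> Units R"
  using PIdl_not_unit[OF t_closed t_not_unit] .

lemma one_neq_zero: "\<one> \<noteq> \<zero>"
proof
  assume "\<one> = \<zero>"
  then have "\<one> \<in> PIdl t"
    using additive_subgroup.zero_closed[OF ideal.axioms(1)[OF PIdl_t_ideal]] by simp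
  then show False
    using PIdl_t_not_unit Units_one_closed by blast
qed

lemma one_plus_PIdl_t_unit:
  assumes x: "x \<in> PIdl t"
  shows "\<one> \<oplus> x \<in> Units R"
proof (rule ccontr)
  interpret T: ideal "PIdl t" R
    by (rule PIdl_t_ideal)
  have xc: "x \<in> carrier R"
    using x by (rule T.Icarr)
  assume "\<one> \<oplus> x \<notin> Units R"
  then have "\<one> \<oplus> x \<in> PIdl t"
    using xc by (intro nonunit_in_PIdl) auto
  then have "(\<one> \<oplus> x) \<oplus> \<ominus> x \<in> PIdl t"
    using x by (rule T.a_closed[OF _ T.a_inv_closed])
  moreover have "(\<one> \<oplus> x) \<oplus> \<ominus> x = \<one>"
    using xc by (simp add: a_assoc r_neg)
  ultimately show False
    using PIdl_t_not_unit[of \<one>] Units_one_closed by simp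
qed

lemma t_nilpotent: "\<exists>n::nat. t [^] n = \<zero>"
proof -
  have "finite (range (\<lambda>n::nat. t [^] n))"
    by (rule finite_subset[OF _ finite_carrier]) auto
  then have "\<not> inj (\<lambda>n::nat. t [^] n)"
    using finite_imageD infinite_UNIV_nat by blast
  then obtain a b :: nat where "a \<noteq> b" "t [^] a = t [^] b"
    unfolding inj_def by blast
  then obtain a b :: nat where "a < b" "t [^] a = t [^] b"
    by (metis linorder_neqE_nat)
  then obtain d where "t [^] a \<otimes> t [^] Suc d = t [^] a"
    using less_imp_Suc_add nat_pow_mult by (metis add_Suc_right t_closed)
  moreover define u where "u = t [^] Suc d"
  ultimately have "t [^] a \<otimes> u = t [^] a" and u: "u \<in> carrier R"
    by simp_all
  then have "(\<one> \<oplus> \<ominus> u) \<otimes> t [^] a = (\<one> \<oplus> \<ominus> u) \<otimes> \<zero>"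
    by (simp add: l_distr l_minus m_comm[of u] r_neg)
  moreover have "\<ominus> u \<in> PIdl t"
    unfolding mem_PIdl_iff[OF t_closed] u_def
    by (intro bexI[of _ "\<ominus> (t [^] d)"]) (simp_all add: r_minus m_comm[of t])
  ultimately have "t [^] a = \<zero>"
    using Units_l_cancel[OF one_plus_PIdl_t_unit] by simp
  then show ?thesis ..
qed

lemma obtain_nilpotency_index:
  obtains N where "t [^] N \<noteq> \<zero>" "t [^] Suc N = \<zero>"
proof -
  obtain n :: nat where n: "t [^] n = \<zero>"
    using t_nilpotent ..
  have "t [^] (0::nat) \<noteq> \<zero>"
    using one_neq_zero by simp
  from ex_least_nat_less[of "\<lambda>n. t [^] n = \<zero>", OF n this]
  obtain k where "\<forall>i\<le>k. t [^] i \<noteq> \<zero>" "t [^] Suc k = \<zero>"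
    by blast
  then show ?thesis
    using that by blast
qed

lemma PIdl_pow_antimono:
  assumes "m \<le> (n::nat)"
  shows "PIdl (t [^] n) \<subseteq> PIdl (t [^] m)"
proof (rule cgenideal_minimal)
  show "ideal (PIdl (t [^] m)) R"
    by (rule cgenideal_ideal) simp
  have "t [^] n = t [^] m \<otimes> t [^] (n - m)"
    using assms by (simp add: nat_pow_mult)
  then show "t [^] n \<in> PIdl (t [^] m)"
    by (auto simp: mem_PIdl_iff)
qed

lemma pow_mult_unit_decomposition:
  assumes x: "x \<in> carrier R" "x \<noteq> \<zero>"
  obtains k u where "u \<in> Units R" "x = t [^] (k::nat) \<otimes> u"
proof -
  have "(\<exists>k::nat. \<exists>u\<in>Units R. x = t [^] k \<otimes> u) \<or> x \<in> PIdl (t [^] m)" for m :: nat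
  proof (induction m)
    case 0
    have "x = t [^] (0::nat) \<otimes> x"
      using x by simp
    then show ?case
      using PIdl_memI[of "t [^] (0::nat)" x] x by simp
  next
    case (Suc m)
    then show ?case
    proof
      assume "x \<in> PIdl (t [^] m)"
      then obtain y where y: "y \<in> carrier R" "x = t [^] m \<otimes> y"
        using PIdl_memE[OF nat_pow_closed[OF t_closed]] by blast
      show ?case
      proof (cases "y \<in> Units R")
        case False
        then obtain z where z: "z \<in> carrier R" "y = t \<otimes> z"
          using nonunit_in_PIdl[OF y(1)] PIdl_memE[OF t_closed] by metis
        then have "x = t [^] Suc m \<otimes> z"
          using y by (simp add: m_assoc)
        then show ?thesis
          using PIdl_memI[of "t [^] Suc m" z] z by simp
      qed (use y in blast)
    qed blast
  qed
  moreover obtain n :: nat where "t [^] n = \<zero>"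
    using t_nilpotent ..
  moreover have "x \<notin> PIdl \<zero>"
    using x PIdl_memE[OF zero_closed] by (metis l_null)
  ultimately show ?thesis
    using that by metis
qed

lemma PIdl_pow_subset_if_not_mem:
  assumes x: "x \<in> carrier R" "x \<notin> PIdl (t [^] Suc m)"
  shows "PIdl (t [^] m) \<subseteq> PIdl x"
proof -
  have "\<zero> \<in> PIdl (t [^] Suc m)"
    using PIdl_memI[of "t [^] Suc m" \<zero>] by simp
  then have "x \<noteq> \<zero>"
    using x(2) by blast
  then obtain k u where u: "u \<in> Units R" and xku: "x = t [^] (k::nat) \<otimes> u"
    using pow_mult_unit_decomposition x(1) by blast
  have "k \<le> m"
  proof (rule ccontr)
    assume "\<not> k \<le> m"
    moreover have "x \<in> PIdl (t [^] k)"
      using PIdl_memI[of "t [^] k" u] Units_closed[OF u] xku by simp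
    ultimately show False
      using x(2) PIdl_pow_antimono[of "Suc m" k] by auto
  qed
  have "x \<otimes> (t [^] (m - k) \<otimes> inv u) = (t [^] k \<otimes> t [^] (m - k)) \<otimes> (u \<otimes> inv u)"
    using Units_closed[OF u] Units_inv_closed[OF u] unfolding xku by (simp add: m_ac)
  also have "\<dots> = t [^] m"
    using u \<open>k \<le> m\<close> by (simp add: nat_pow_mult)
  finally have "t [^] m \<in> PIdl x"
    using PIdl_memI[OF x(1), of "t [^] (m - k) \<otimes> inv u"] Units_inv_closed[OF u] by simp
  then show ?thesis
    by (rule cgenideal_minimal[OF cgenideal_ideal[OF x(1)]])
qed

lemma maximalideal_PIdl_t: "maximalideal (PIdl t) R"
proof (rule maximalidealI[OF PIdl_t_ideal])
  show "carrier R \<noteq> PIdl t"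
    using PIdl_t_not_unit Units_one_closed one_closed by blast
  fix J assume J: "ideal J R" "PIdl t \<subseteq> J" "J \<subseteq> carrier R"
  show "J = PIdl t \<or> J = carrier R"
  proof (cases "J \<subseteq> PIdl t")
    case False
    then obtain j where "j \<in> J" "j \<notin> PIdl t"
      by blast
    then have "j \<in> Units R"
      using nonunit_in_PIdl J(3) by blast
    then show ?thesis
      using ideal_eq_carrier_if_unit[OF J(1) \<open>j \<in> J\<close>] by blast
  qed (use J in blast)
qed

lemma maximalideal_eq_PIdl_t:
  assumes "maximalideal M R"
  shows "M = PIdl t"
proof -
  interpret M: maximalideal M R
    by fact
  have "M \<subseteq> PIdl t"
    using ideal_eq_carrier_if_unit[OF M.is_ideal] M.I_notcarr nonunit_in_PIdl M.Icarr by blast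
  then have "PIdl t = M \<or> PIdl t = carrier R"
    using M.I_maximal[OF PIdl_t_ideal] ideal.Icarr[OF PIdl_t_ideal] by blast
  then show ?thesis
    using maximalideal.I_notcarr[OF maximalideal_PIdl_t] by blast
qed

lemma rad_eq_PIdl_t: "rad R = PIdl t"
  unfolding rad_def
  using maximalideal_PIdl_t maximalideal_eq_PIdl_t ideal.Icarr[OF PIdl_t_ideal] by blast

lemma one_notin_I0: "\<one> \<notin> I0 R"
  unfolding I0_def rad_eq_PIdl_t using PIdl_t_not_unit Units_one_closed by blast

lemma mult_t_PIdl_pow_eq_zero:
  assumes "t [^] Suc N = \<zero>" "x \<in> PIdl (t [^] N)"
  shows "t \<otimes> x = \<zero>"
proof -
  obtain y where y: "y \<in> carrier R" "x = t [^] N \<otimes> y"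
    using PIdl_memE[OF nat_pow_closed[OF t_closed] assms(2)] by blast
  then have "t \<otimes> x = (t \<otimes> t [^] N) \<otimes> y"
    by (simp add: m_assoc)
  also have "t \<otimes> t [^] N = \<zero>"
    using assms(1) nat_pow_Suc2[OF t_closed, of N] by simp
  finally show ?thesis
    using y by simp
qed

lemma mult_t_eq_zero_iff:
  assumes N: "t [^] N \<noteq> \<zero>" "t [^] Suc N = \<zero>" and x: "x \<in> carrier R"
  shows "t \<otimes> x = \<zero> \<longleftrightarrow> x \<in> PIdl (t [^] N)"
proof
  assume tx: "t \<otimes> x = \<zero>"
  show "x \<in> PIdl (t [^] N)"
  proof (cases "x = \<zero>")
    case True
    then show ?thesis
      using PIdl_memI[of "t [^] N" \<zero>] by simp
  next
    case False
    then obtain k u where u: "u \<in> Units R" and xku: "x = t [^] (k::nat) \<otimes> u"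
      using pow_mult_unit_decomposition x by blast
    have "t [^] Suc k \<otimes> u = \<zero>"
      using tx Units_closed[OF u] unfolding xku nat_pow_Suc2[OF t_closed] by (simp add: m_assoc)
    then have "t [^] Suc k = \<zero>"
      using mult_Units_eq_zero_iff[OF u] by simp
    then have "N \<le> k"
      using N(1) nat_pow_eq_zero_mono[OF t_closed, of "Suc k" N] by linarith
    moreover have "x \<in> PIdl (t [^] k)"
      using PIdl_memI[of "t [^] k" u] Units_closed[OF u] xku by simp
    ultimately show ?thesis
      using PIdl_pow_antimono by blast
  qed
qed (rule mult_t_PIdl_pow_eq_zero[OF N(2)])

lemma I0_eq:
  assumes N: "t [^] N \<noteq> \<zero>" "t [^] Suc N = \<zero>" and t: "t \<noteq> \<zero>"
  shows "I0 R = PIdl (t [^] N)"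
proof -
  have "0 < N"
    using N(2) t by (cases N) auto
  then have sub: "PIdl (t [^] N) \<subseteq> PIdl t"
    using PIdl_pow_antimono[of 1 N] by simp
  have "x \<in> I0 R \<longleftrightarrow> x \<in> PIdl (t [^] N)" if x: "x \<in> PIdl t" for x
  proof -
    have xc: "x \<in> carrier R"
      using x ideal.Icarr[OF PIdl_t_ideal] by blast
    have "(\<forall>y\<in>PIdl t. x \<otimes> y = \<zero>) \<longleftrightarrow> t \<otimes> x = \<zero>"
    proof
      assume "\<forall>y\<in>PIdl t. x \<otimes> y = \<zero>"
      then show "t \<otimes> x = \<zero>"
        using cgenideal_self[OF t_closed] m_comm[OF xc t_closed] by simp
    next
      assume tx: "t \<otimes> x = \<zero>"
      show "\<forall>y\<in>PIdl t. x \<otimes> y = \<zero>"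
      proof
        fix y assume "y \<in> PIdl t"
        then obtain c where "c \<in> carrier R" "y = t \<otimes> c"
          using PIdl_memE[OF t_closed] by blast
        then show "x \<otimes> y = \<zero>"
          using tx xc by (simp add: m_lcomm m_assoc[symmetric])
      qed
    qed
    then show ?thesis
      unfolding I0_def rad_eq_PIdl_t using x mult_t_eq_zero_iff[OF N xc] by simp
  qed
  then show ?thesis
    using sub unfolding I0_def rad_eq_PIdl_t by blast
qed

lemma field_iff_t_eq_zero: "field R \<longleftrightarrow> t = \<zero>"
proof
  assume "field R"
  then show "t = \<zero>"
    using field.field_Units t_not_unit by fastforce
next
  assume t: "t = \<zero>"
  have "x \<in> Units R" if "x \<in> carrier R" "x \<noteq> \<zero>" for x
    using nonunit_in_PIdl[OF that(1)] PIdl_memE[OF t_closed] that t by (metis l_null)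
  moreover have "\<zero> \<notin> Units R"
    using nilpotent_not_unit[OF one_neq_zero, of \<zero> 1] by simp
  ultimately show "field R"
    by (intro cring_fieldI) blast
qed

lemma finite_chain_ring_image:
  assumes h: "h \<in> ring_hom R S" and S: "cring S" and surj: "h ` carrier R = carrier S"
    and nontrivial: "\<one>\<^bsub>S\<^esub> \<noteq> \<zero>\<^bsub>S\<^esub>"
  shows "finite_chain_ring S (h t)"
proof -
  interpret S: cring S
    by (rule S)
  interpret hom: ring_hom_ring R S h
    using ring_hom_ringI2[OF ring_axioms S.ring_axioms h] .
  obtain n :: nat where "t [^] n = \<zero>"
    using t_nilpotent ..
  then have "h t [^]\<^bsub>S\<^esub> n = \<zero>\<^bsub>S\<^esub>"
    using hom.hom_nat_pow[OF t_closed, of n, symmetric] by simp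
  then have "h t \<notin> Units S"
    by (rule S.nilpotent_not_unit[OF nontrivial])
  moreover have "x \<in> PIdl\<^bsub>S\<^esub> (h t)" if "x \<in> carrier S" "x \<notin> Units S" for x
  proof -
    have "x \<in> h ` carrier R"
      using surj that(1) by simp
    then obtain a where a: "a \<in> carrier R" "x = h a"
      by blast
    have "a \<notin> Units R"
    proof
      assume "a \<in> Units R"
      then have "h a \<in> Units S"
        by (rule hom.hom_Units)
      with that(2) a(2) show False
        by simp
    qed
    then have "a \<in> PIdl t"
      by (rule nonunit_in_PIdl[OF a(1)])
    then obtain y where y: "y \<in> carrier R" "a = t \<otimes> y"
      by (rule PIdl_memE[OF t_closed])
    have "x = h t \<otimes>\<^bsub>S\<^esub> h y"
      using a y by simp
    then show ?thesis
      using S.PIdl_memI[of "h t" "h y"] y by simp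
  qed
  moreover have "finite (carrier S)"
    using finite_carrier surj finite_imageI by metis
  ultimately show ?thesis
    using S by (intro finite_chain_ring.intro finite_chain_ring_axioms.intro) simp_all
qed

lemma quotient_ideal_contains_pow_image:
  assumes h: "h \<in> ring_hom R S" "ring S" "h ` carrier R = carrier S"
    and ker: "a_kernel R S h = PIdl (t [^] Suc M)"
    and J: "ideal J S" "J \<noteq> {\<zero>\<^bsub>S\<^esub>}" "J \<noteq> carrier S"
  shows "0 < M \<and> (\<forall>w\<in>carrier R. h (t [^] M \<otimes> w) \<in> J)"
proof -
  interpret S: ring S
    by (rule h(2))
  interpret hom: ring_hom_ring R S h
    using ring_hom_ringI2[OF ring_axioms S.ring_axioms h(1)] .
  have "\<zero>\<^bsub>S\<^esub> \<in> J"
    using additive_subgroup.zero_closed[OF ideal.axioms(1)[OF J(1)]] .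
  then obtain j where j: "j \<in> J" "j \<noteq> \<zero>\<^bsub>S\<^esub>"
    using J(2) by blast
  then have "j \<in> h ` carrier R"
    using ideal.Icarr[OF J(1)] h(3) by blast
  then obtain x0 where x0: "x0 \<in> carrier R" "j = h x0"
    by blast
  have x0_not_ker: "x0 \<notin> PIdl (t [^] Suc M)"
    using j(2) x0 ker unfolding a_kernel_def' by blast
  have "x0 \<notin> Units R"
  proof
    assume "x0 \<in> Units R"
    then have "j \<in> Units S"
      using hom.hom_Units x0(2) by simp
    then show False
      using S.ideal_eq_carrier_if_unit[OF J(1) j(1)] J(3) by blast
  qed
  then have "x0 \<in> PIdl (t [^] Suc 0)"
    using nonunit_in_PIdl[OF x0(1)] by simp
  then have "0 < M"
    using x0_not_ker by (cases M) auto
  moreover have "h (t [^] M \<otimes> w) \<in> J" if w: "w \<in> carrier R" for w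
  proof -
    have "t [^] M \<otimes> w \<in> PIdl x0"
      using PIdl_pow_subset_if_not_mem[OF x0(1) x0_not_ker] PIdl_memI[of "t [^] M" w] w by auto
    then obtain c where c: "c \<in> carrier R" "t [^] M \<otimes> w = x0 \<otimes> c"
      using PIdl_memE[OF x0(1)] by blast
    then have "h (t [^] M \<otimes> w) = j \<otimes>\<^bsub>S\<^esub> h c"
      using x0 by simp
    then show ?thesis
      using ideal.I_r_closed[OF J(1) j(1)] c(1) by simp
  qed
  ultimately show ?thesis
    by blast
qed

end

section \<open>Galois rings of odd characteristic\<close>

text \<open>Fixing \<open>p\<close>, rather than referring to the residue characteristic as \<open>galois_ring\<close> does,
  makes this class closed under quotients by proper ideals.\<close>

locale odd_galois_ring = finite_chain_ring +
  fixes p :: nat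
  assumes t_eq_add_pow: "t = add_pow R p \<one>"
    and two_unit: "add_pow R (2::nat) \<one> \<in> Units R"
begin

lemma add_pow_p_eq: "x \<in> carrier R \<Longrightarrow> add_pow R p x = t \<otimes> x"
  using add_pow_ldistr[OF one_closed, of x p] by (simp add: t_eq_add_pow)

lemma one_plus_pow_p:
  assumes nil: "t [^] Suc (2 * M) = \<zero>" and M: "0 < M" and x: "x \<in> PIdl (t [^] M)"
  shows "(\<one> \<oplus> x) [^] p = \<one> \<oplus> t \<otimes> x"
proof -
  obtain w where w: "w \<in> carrier R" "x = t [^] M \<otimes> w"
    using PIdl_memE[OF nat_pow_closed[OF t_closed] x] by blast
  have xc: "x \<in> carrier R"
    using w by simp
  have "t \<otimes> (x \<otimes> x) = t [^] Suc (2 * M) \<otimes> (w \<otimes> w)"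
    using w by (simp add: nat_pow_Suc2[OF t_closed] nat_pow_mult[symmetric] mult_2 m_ac)
  then have sq: "add_pow R p (x \<otimes> x) = \<zero>"
    using nil w xc by (simp add: add_pow_p_eq)
  have "x \<otimes> x \<otimes> x = (t [^] M \<otimes> t [^] M \<otimes> t [^] M) \<otimes> (w \<otimes> w \<otimes> w)"
    using w by (simp add: m_ac)
  also have "t [^] M \<otimes> t [^] M \<otimes> t [^] M = t [^] (M + M + M)"
    by (simp add: nat_pow_mult)
  also have "\<dots> = \<zero>"
    using nat_pow_eq_zero_mono[OF t_closed nil] M by simp
  finally have cube: "x \<otimes> x \<otimes> x = \<zero>"
    using w by simp
  show ?thesis
    using one_plus_pow_if_two_unit[OF two_unit xc cube sq] add_pow_p_eq[OF xc] by simp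
qed

lemma pow_p_eq_if_diff_in_PIdl:
  assumes nil: "t [^] Suc N = \<zero>" and N: "0 < N"
    and k: "k \<in> Units R" and a: "a \<in> carrier R" and diff: "a \<ominus> k \<in> PIdl (t [^] N)"
  shows "a [^] p = k [^] p"
proof -
  interpret I: ideal "PIdl (t [^] N)" R
    by (rule cgenideal_ideal) simp
  have kc: "k \<in> carrier R" "inv k \<in> carrier R"
    using Units_closed[OF k] Units_inv_closed[OF k] .
  define z where "z = inv k \<otimes> (a \<ominus> k)"
  have z: "z \<in> PIdl (t [^] N)"
    unfolding z_def using I.I_l_closed[OF diff kc(2)] .
  have zc: "z \<in> carrier R"
    using z I.Icarr by blast
  have "k \<otimes> (\<one> \<oplus> z) = k \<oplus> (k \<otimes> inv k) \<otimes> (a \<ominus> k)"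
    unfolding z_def using kc a by (simp add: r_distr m_assoc)
  also have "\<dots> = a"
    using kc a k by (simp add: minus_eq a_ac r_neg)
  finally have a_eq: "a = k \<otimes> (\<one> \<oplus> z)" ..
  have "t [^] Suc (2 * N) = \<zero>"
    using nat_pow_eq_zero_mono[OF t_closed nil, of "Suc (2 * N)"] by simp
  then have "(\<one> \<oplus> z) [^] p = \<one>"
    using one_plus_pow_p[OF _ N z] mult_t_PIdl_pow_eq_zero[OF nil z] by simp
  then show ?thesis
    unfolding a_eq using kc zc by (simp add: nat_pow_distrib)
qed

text \<open>The \<open>p\<close>-th power map sends \<open>1 + t^M w\<close> to \<open>1 + t^(M+1) w\<close> and \<open>k (1 + z)\<close>, with \<open>z\<close>
  in the socle \<open>t^(M+1) R\<close>, to \<open>k^p\<close>; so a congruence modulo the socle becomes membership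
  in \<open>K\<close>.\<close>

lemma one_plus_PIdl_pow_in_subgroup:
  assumes nil: "t [^] Suc (Suc M) = \<zero>" and M: "0 < M" and K: "subgroup K (units_of R)"
    and lift: "\<And>w. w \<in> carrier R \<Longrightarrow> \<exists>k\<in>K. (\<one> \<oplus> t [^] M \<otimes> w) \<ominus> k \<in> PIdl (t [^] Suc M)"
    and y: "y \<in> PIdl (t [^] Suc M)"
  shows "\<one> \<oplus> y \<in> K"
proof -
  obtain w where w: "w \<in> carrier R" "y = t [^] Suc M \<otimes> w"
    using PIdl_memE[OF nat_pow_closed[OF t_closed] y] by blast
  obtain k where k: "k \<in> K" "(\<one> \<oplus> t [^] M \<otimes> w) \<ominus> k \<in> PIdl (t [^] Suc M)"
    using lift[OF w(1)] by blast
  have "t [^] Suc (2 * M) = \<zero>"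
    using nat_pow_eq_zero_mono[OF t_closed nil, of "Suc (2 * M)"] M by simp
  moreover have "t [^] M \<otimes> w \<in> PIdl (t [^] M)"
    using PIdl_memI w(1) by simp
  moreover have "t \<otimes> (t [^] M \<otimes> w) = y"
    using w by (simp add: m_assoc[symmetric] m_comm[of t "t [^] M"])
  ultimately have "\<one> \<oplus> y = (\<one> \<oplus> t [^] M \<otimes> w) [^] p"
    using one_plus_pow_p[OF _ M] by simp
  also have "\<dots> = k [^] p"
  proof (rule pow_p_eq_if_diff_in_PIdl[OF nil _ _ _ k(2)])
    show "k \<in> Units R"
      using subgroup_units_of_subset[OF K] k(1) by blast
  qed (use w(1) in simp_all)
  finally show ?thesis
    using subgroup_units_of_nat_pow_closed[OF K k(1)] by simp
qed

lemma ideal_eq_zero_if_one_plus_in_image: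
  assumes h: "h \<in> ring_hom R S" "ring S" "h ` carrier R = carrier S"
    and ker: "a_kernel R S h = PIdl (t [^] Suc M)"
    and N: "t [^] Suc M \<noteq> \<zero>" "t [^] Suc (Suc M) = \<zero>" and pure: "pure R K"
    and J: "ideal J S" "J \<noteq> carrier S" and JK: "\<forall>x\<in>J. \<one>\<^bsub>S\<^esub> \<oplus>\<^bsub>S\<^esub> x \<in> h ` K"
  shows "J = {\<zero>\<^bsub>S\<^esub>}"
proof (rule ccontr)
  interpret hom: ring_hom_ring R S h
    using ring_hom_ringI2[OF ring_axioms h(2,1)] .
  have K: "subgroup K (units_of R)"
    using pure unfolding pure_def by blast
  assume "J \<noteq> {\<zero>\<^bsub>S\<^esub>}"
  then have "0 < M" and socle: "\<forall>w\<in>carrier R. h (t [^] M \<otimes> w) \<in> J"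
    using quotient_ideal_contains_pow_image[OF h ker J(1) _ J(2)] by blast+
  have "\<one> \<oplus> y \<in> K" if y: "y \<in> PIdl (t [^] Suc M)" for y
  proof (rule one_plus_PIdl_pow_in_subgroup[OF N(2) \<open>0 < M\<close> K _ y])
    fix w assume w: "w \<in> carrier R"
    then have "\<one>\<^bsub>S\<^esub> \<oplus>\<^bsub>S\<^esub> h (t [^] M \<otimes> w) \<in> h ` K"
      using JK socle by blast
    then obtain k where k: "k \<in> K" "\<one>\<^bsub>S\<^esub> \<oplus>\<^bsub>S\<^esub> h (t [^] M \<otimes> w) = h k"
      by blast
    have kc: "k \<in> carrier R"
      using subgroup_units_of_subset[OF K] k(1) Units_closed by blast
    have c: "\<one> \<oplus> t [^] M \<otimes> w \<in> carrier R"
      using w by simp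
    have "h (\<one> \<oplus> t [^] M \<otimes> w) = h k"
      using w k(2) by simp
    then have "(\<one> \<oplus> t [^] M \<otimes> w) \<ominus> k \<in> PIdl (t [^] Suc M)"
      using hom.hom_eq_iff_minus_in_kernel[OF c kc] unfolding ker by blast
    then show "\<exists>k\<in>K. (\<one> \<oplus> t [^] M \<otimes> w) \<ominus> k \<in> PIdl (t [^] Suc M)"
      using k(1) by blast
  qed
  then have "PIdl (t [^] Suc M) = {\<zero>}"
    using pure cgenideal_ideal[of "t [^] Suc M"] unfolding pure_def by simp
  then show False
    using N(1) cgenideal_self[of "t [^] Suc M"] by simp
qed

lemma pure_image_mod_I0:
  assumes h: "h \<in> ring_hom R S" and S: "cring S" and surj: "h ` carrier R = carrier S"
    and ker: "a_kernel R S h = I0 R" and t: "t \<noteq> \<zero>" and pure: "pure R K"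
  shows "pure S (h ` K)"
proof -
  interpret S: cring S
    by (rule S)
  interpret hom: ring_hom_ring R S h
    using ring_hom_ringI2[OF ring_axioms S.ring_axioms h] .
  obtain N where N: "t [^] N \<noteq> \<zero>" "t [^] Suc N = \<zero>"
    by (rule obtain_nilpotency_index)
  then obtain M where M: "N = Suc M"
    using t by (cases N) auto
  have K: "subgroup K (units_of R)"
    using pure unfolding pure_def by blast
  have "\<one> \<notin> a_kernel R S h"
    unfolding ker by (rule one_notin_I0)
  then have "\<one>\<^bsub>S\<^esub> \<noteq> \<zero>\<^bsub>S\<^esub>"
    unfolding a_kernel_def' by simp
  then have zero_not_unit: "\<zero>\<^bsub>S\<^esub> \<notin> Units S"
    by (rule S.nilpotent_not_unit[of "\<zero>\<^bsub>S\<^esub>" "1::nat"]) simp_all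
  have zero_notin: "\<zero>\<^bsub>S\<^esub> \<notin> h ` K"
  proof
    assume "\<zero>\<^bsub>S\<^esub> \<in> h ` K"
    then obtain k where "k \<in> K" "\<zero>\<^bsub>S\<^esub> = h k"
      by blast
    then show False
      using subgroup_units_of_subset[OF K] hom.hom_Units zero_not_unit by auto
  qed
  have "J = {\<zero>\<^bsub>S\<^esub>}" if J: "ideal J S" and JK: "\<forall>x\<in>J. \<one>\<^bsub>S\<^esub> \<oplus>\<^bsub>S\<^esub> x \<in> h ` K" for J
  proof (rule ideal_eq_zero_if_one_plus_in_image[OF h S.ring_axioms surj _ _ _ pure J _ JK])
    show "a_kernel R S h = PIdl (t [^] Suc M)"
      using ker I0_eq[OF N t] M by simp
    show "t [^] Suc M \<noteq> \<zero>" "t [^] Suc (Suc M) = \<zero>"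
      using N M by simp_all
    show "J \<noteq> carrier S"
    proof
      assume "J = carrier S"
      then have "\<one>\<^bsub>S\<^esub> \<oplus>\<^bsub>S\<^esub> \<ominus>\<^bsub>S\<^esub> \<one>\<^bsub>S\<^esub> \<in> h ` K"
        using JK by simp
      then show False
        using zero_notin by (simp add: S.r_neg)
    qed
  qed
  then show ?thesis
    unfolding pure_def using hom.subgroup_units_image[OF K] by blast
qed

lemma odd_galois_ring_image:
  assumes h: "h \<in> ring_hom R S" and S: "cring S" and surj: "h ` carrier R = carrier S"
    and nontrivial: "\<one>\<^bsub>S\<^esub> \<noteq> \<zero>\<^bsub>S\<^esub>"
  shows "odd_galois_ring S (h t) p"
proof -
  interpret S: cring S
    by (rule S)
  interpret hom: ring_hom_ring R S h
    using ring_hom_ringI2[OF ring_axioms S.ring_axioms h] .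
  show ?thesis
  proof (intro odd_galois_ring.intro odd_galois_ring_axioms.intro)
    show "finite_chain_ring S (h t)"
      by (rule finite_chain_ring_image[OF h S surj nontrivial])
    show "h t = add_pow S p \<one>\<^bsub>S\<^esub>"
      using hom.hom_add_pow[OF one_closed, of p] by (simp add: t_eq_add_pow)
    show "add_pow S (2::nat) \<one>\<^bsub>S\<^esub> \<in> Units S"
      using hom.hom_Units[OF two_unit] hom.hom_add_pow[OF one_closed, of 2] by simp
  qed
qed

lemma quotient_by_I0:
  assumes t: "t \<noteq> \<zero>" and pure: "pure R K"
  obtains S :: "'a ring" and h t' where "h \<in> ring_iso (R Quot I0 R) S"
    and "odd_galois_ring S t' p" and "card (carrier S) < card (carrier R)"
    and "pure S (h ` pi0_image R K)"
proof -
  obtain N where N: "t [^] N \<noteq> \<zero>" "t [^] Suc N = \<zero>"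
    by (rule obtain_nilpotency_index)
  have I0: "I0 R = PIdl (t [^] N)"
    by (rule I0_eq[OF N t])
  define f where "f = (\<lambda>a. SOME b. b \<in> I0 R +> a)"
  have f: "weak_ring_morphism f (I0 R) R"
    unfolding f_def I0 by (rule weak_ring_morphism_coset_rep[OF cgenideal_ideal]) simp
  define S where "S = image_ring f R"
  have hom: "f \<in> ring_hom R S" and S: "cring S" and surj: "f ` carrier R = carrier S"
    unfolding S_def using weak_ring_morphism_is_hom[OF f] image_ring_is_cring[OF f]
    by (simp_all add: image_ring_carrier)
  have iso: "(\<lambda>C. the_elem (f ` C)) \<in> ring_iso (R Quot I0 R) S"
    unfolding S_def by (rule weak_ring_morphism_is_iso[OF f])
  have card: "card (carrier S) < card (carrier R)"
    unfolding S_def using card_image_ring_less[OF f finite_carrier _ N(1)] I0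
      cgenideal_self[of "t [^] N"] by simp
  have galois: "odd_galois_ring S (f t) p"
    using odd_galois_ring_image[OF hom S surj] image_ring_one_neq_zero[OF f one_notin_I0]
    unfolding S_def by simp
  have "pure S (f ` K)"
    using pure_image_mod_I0[OF hom S surj _ t pure] weak_ring_morphism_ker[OF f]
    unfolding S_def by simp
  moreover have "(\<lambda>C. the_elem (f ` C)) ` pi0_image R K = f ` K"
    using the_elem_image_pi0_image[OF f] subgroup_units_of_subset pure Units_closed
    unfolding pure_def by blast
  ultimately show ?thesis
    using that[OF iso galois card] by simp
qed

end

lemma pure_imp_strongly_pure:
  fixes R :: "'a ring"
  assumes "odd_galois_ring R t p" "pure R K"
  shows "strongly_pure R K"
  using assms
proof (induction "card (carrier R)" arbitrary: R t K rule: less_induct)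
  case less
  interpret R: odd_galois_ring R t p
    by (rule less.prems(1))
  show ?case
  proof (cases "t = \<zero>\<^bsub>R\<^esub>")
    case True
    then show ?thesis
      using sp_field less.prems(2) R.field_iff_t_eq_zero by blast
  next
    case False
    obtain S :: "'a ring" and h t' where iso: "h \<in> ring_iso (R Quot I0 R) S"
      and "odd_galois_ring S t' p" "card (carrier S) < card (carrier R)"
      "pure S (h ` pi0_image R K)"
      using R.quotient_by_I0[OF False less.prems(2)] by blast
    then have "strongly_pure S (h ` pi0_image R K)"
      using less.hyps by blast
    moreover have "\<not> field R"
      using R.field_iff_t_eq_zero False by simp
    ultimately show ?thesis
      using sp_step[OF less.prems(2) _ iso] by blast
  qed
qed

lemma galois_ring_is_odd_galois_ring:
  fixes R (structure)
  assumes "galois_ring R" and "odd (alg_ring_char R)"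
  shows "odd_galois_ring R (add_pow R (residue_char R) \<one>) (residue_char R)"
proof -
  define p where "p = residue_char R"
  define t where "t = add_pow R p \<one>"
  have local: "finite_local_cring R" and rad: "rad R = {add_pow R p x | x. x \<in> carrier R}"
    using assms(1) unfolding galois_ring_def p_def by blast+
  interpret cring R
    using local unfolding finite_local_cring_def by blast
  have t: "t \<in> carrier R"
    unfolding t_def by simp
  have "add_pow R p x = t \<otimes> x" if "x \<in> carrier R" for x
    using add_pow_ldistr[OF one_closed that, of p] that unfolding t_def by simp
  then have "rad R = {t \<otimes> x | x. x \<in> carrier R}"
    unfolding rad by metis
  also have "\<dots> = PIdl t"
    using mem_PIdl_iff[OF t] by blast
  finally have PIdl_t: "PIdl t = carrier R - Units R"
    using finite_local_rad_eq_nonunits[OF local] by simp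
  have "finite_chain_ring R t"
  proof (intro finite_chain_ring.intro finite_chain_ring_axioms.intro)
    show "cring R" "finite (carrier R)"
      using local unfolding finite_local_cring_def by blast+
    show "t \<in> carrier R" "t \<notin> Units R"
      using t PIdl_t cgenideal_self[OF t] by blast+
    show "x \<in> PIdl t" if "x \<in> carrier R" "x \<notin> Units R" for x
      using that PIdl_t by blast
  qed
  then show ?thesis
    using two_unit_if_odd_char[OF assms(2)] unfolding t_def p_def
    by (intro odd_galois_ring.intro odd_galois_ring_axioms.intro) simp_all
qed

theorem theorem6p6:
  fixes R :: "'a ring" and K :: "'a set"
  assumes "galois_ring R"
    and "odd (alg_ring_char R)"
    and "pure R K"
  shows "strongly_pure R K"
  by (rule pure_imp_strongly_pure[OF galois_ring_is_odd_galois_ring[OF assms(1,2)] assms(3)])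

end
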